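(* Let $f:\mathbb{R}\to\mathbb{R}$ be continuous and monotonic. Then $L_f^\infty$ is a $G_\delta$ set of Lebesgue measure zero. Conversely, if $E\subset\mathbb{R}$ is a $G_\delta$ set of Lebesgue measure zero, then there exists a continuous monotonic function $f:\mathbb{R}\to\mathbb{R}$ such that $L_f^\infty=E$ and $l_f^\infty=\emptyset$; moreover, $f$ can be chosen so that in addition $\operatorname{lip} f(x)=0$ for all $x\in E$.
   Context: For a continuous $f:\mathbb{R}\to\mathbb{R}$, $x\in\mathbb{R}$ and $r>0$, let $M_f(x,r)=\sup\{|f(x)-f(y)|/r : |x-y|\le r\}$. Define $\operatorname{Lip} f(x)=\limsup_{r\to0^+}M_f(x,r)$ and $\operatorname{lip} f(x)=\liminf_{r\to0^+}M_f(x,r)$ (values in $[0,\infty]$). Let $L_f^\infty=\{x\in\mathbb{R}:\operatorname{Lip} f(x)=\infty\}$ and $l_f^\infty=\{x\in\mathbb{R}:\operatorname{lip} f(x)=\infty\}$. *)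

theory Defs
  imports "HOL-Analysis.Analysis"
begin

definition Mf :: "(real \<Rightarrow> real) \<Rightarrow> real \<Rightarrow> real \<Rightarrow> ereal" where
  "Mf f x r = (SUP y\<in>{y. \<bar>x - y\<bar> \<le> r}. ereal (\<bar>f x - f y\<bar> / r))"

definition Lip_upper :: "(real \<Rightarrow> real) \<Rightarrow> real \<Rightarrow> ereal" where
  "Lip_upper f x = Limsup (at_right 0) (\<lambda>r. Mf f x r)"

definition lip_lower :: "(real \<Rightarrow> real) \<Rightarrow> real \<Rightarrow> ereal" where
  "lip_lower f x = Liminf (at_right 0) (\<lambda>r. Mf f x r)"

definition L_inf :: "(real \<Rightarrow> real) \<Rightarrow> real set" where
  "L_inf f = {x. Lip_upper f x = \<infinity>}"

definition l_inf :: "(real \<Rightarrow> real) \<Rightarrow> real set" where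
  "l_inf f = {x. lip_lower f x = \<infinity>}"

end

theory Submission
  imports Defs
begin

text \<open>
  For monotone \<open>f\<close> the supremum \<open>M_f(x, r)\<close> is attained at \<open>x \<plusminus> r\<close>, so it is continuous in \<open>x\<close>
  when \<open>f\<close> is, and \<open>L_f^\<infinity> = (\<Inter>n. \<Union>r < 1/n. {x. M_f(x, r) > n})\<close> is a \<open>G\<^sub>\<delta>\<close> set. By the
  Vitali covering theorem, \<open>L_f^\<infinity> \<inter> (-R, R)\<close> is covered, up to a null set, by disjoint
  intervals \<open>(x - r, x + r]\<close> on which \<open>f\<close> increases by more than \<open>M r\<close>; their total length is
  at most \<open>2 (f(R + 1) - f(-R - 1)) / M\<close>, for every \<open>M\<close>.

  Conversely, write \<open>E = (\<Inter>m. G m)\<close> with decreasing open sets \<open>G m\<close>, where \<open>G (m + 1)\<close> has measure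
  at most \<open>\<epsilon> (m + 1)\<close> and is so thin near the complement of \<open>G m\<close> that it meets every interval
  of radius \<open>\<rho>\<close> within \<open>5 \<rho>\<close> of that complement in measure at most \<open>\<epsilon> (m + 1) \<rho>\<close>. Let
  \<open>F x = (\<Sum>m. a m |(G m - G (m + 1)) \<inter> (-\<infinity>, x]|)\<close> with \<open>a m = m\<close> for odd and \<open>0\<close> for even \<open>m\<close>;
  the choice \<open>\<epsilon> m = 4^-m / (m + 1)\<close> makes \<open>a m \<epsilon> m \<le> 4^-m\<close>, so \<open>F\<close> is continuous. A point
  outside \<open>E\<close> leaves some \<open>G N\<close>, beyond which all layers are thin around it, so its slopes stay
  bounded. For \<open>x \<in> E\<close> and \<open>r = d(x, -G n) / 4\<close> the interval \<open>(x - r, x + r]\<close> lies in \<open>G n\<close> within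
  \<open>4 r\<close> of its complement, hence mostly in the layer \<open>G n - G (n + 1)\<close>: the slope is at least
  \<open>n / 2\<close> for odd \<open>n\<close>, and at most \<open>2^(1-n)\<close> for even \<open>n\<close>, since the layers up to \<open>n\<close> carry no
  weight there and the deeper ones are thin. As \<open>r \<rightarrow> 0\<close> when \<open>n \<rightarrow> \<infinity>\<close>, this gives
  \<open>Lip F x = \<infinity>\<close> and \<open>lip F x = 0\<close>.
\<close>

section \<open>The slope quotient of a monotone function\<close>

definition max_slope :: "(real \<Rightarrow> real) \<Rightarrow> real \<Rightarrow> real \<Rightarrow> real" where
  "max_slope f x r = max (f (x + r) - f x) (f x - f (x - r)) / r"

lemma Mf_mono_eq_max_slope:
  assumes "mono f" "r > 0"
  shows "Mf f x r = ereal (max_slope f x r)"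
proof -
  have ends: "f x \<le> f (x + r)" "f (x - r) \<le> f x"
    using assms by (simp_all add: monoD)
  have bound: "\<bar>f x - f y\<bar> \<le> max (f (x + r) - f x) (f x - f (x - r))" if "\<bar>x - y\<bar> \<le> r" for y
  proof (cases "x \<le> y")
    case True
    with that assms(1) have "f x \<le> f y" "f y \<le> f (x + r)" by (simp_all add: monoD)
    then show ?thesis by auto
  next
    case False
    with that assms(1) have "f y \<le> f x" "f (x - r) \<le> f y" by (simp_all add: monoD)
    then show ?thesis by auto
  qed
  have "max (f (x + r) - f x) (f x - f (x - r)) = \<bar>f x - f (x + r)\<bar>
      \<or> max (f (x + r) - f x) (f x - f (x - r)) = \<bar>f x - f (x - r)\<bar>"
    using ends by (auto simp: max_def)
  moreover have "\<bar>x - (x + r)\<bar> \<le> r" "\<bar>x - (x - r)\<bar> \<le> r"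
    using assms(2) by simp_all
  ultimately obtain y where attained: "\<bar>x - y\<bar> \<le> r"
    "max (f (x + r) - f x) (f x - f (x - r)) = \<bar>f x - f y\<bar>"
    by blast
  show ?thesis
    unfolding Mf_def max_slope_def
  proof (rule antisym)
    show "(SUP y\<in>{y. \<bar>x - y\<bar> \<le> r}. ereal (\<bar>f x - f y\<bar> / r))
        \<le> ereal (max (f (x + r) - f x) (f x - f (x - r)) / r)"
      using bound assms(2) by (auto intro!: SUP_least divide_right_mono)
    from attained show "ereal (max (f (x + r) - f x) (f x - f (x - r)) / r)
        \<le> (SUP y\<in>{y. \<bar>x - y\<bar> \<le> r}. ereal (\<bar>f x - f y\<bar> / r))"
      by (auto intro: SUP_upper2)
  qed
qed

lemma max_slope_nonneg: "mono f \<Longrightarrow> r > 0 \<Longrightarrow> 0 \<le> max_slope f x r"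
  unfolding max_slope_def by (auto intro!: divide_nonneg_pos simp: le_max_iff_disj monoD)

lemma max_slope_le_secant:
  assumes "mono f" "r > 0"
  shows "max_slope f x r \<le> (f (x + r) - f (x - r)) / r"
  using assms unfolding max_slope_def by (auto intro!: divide_right_mono simp: monoD)

lemma secant_le_max_slope:
  assumes "mono f" "r > 0"
  shows "(f (x + r) - f (x - r)) / (2 * r) \<le> max_slope f x r"
proof -
  have "f (x - r) \<le> f x" "f x \<le> f (x + r)"
    using assms by (simp_all add: monoD)
  have "(f (x + r) - f (x - r)) / (2 * r) = ((f (x + r) - f (x - r)) / 2) / r" by simp
  also have "\<dots> \<le> max_slope f x r"
    unfolding max_slope_def using assms \<open>f (x - r) \<le> f x\<close> \<open>f x \<le> f (x + r)\<close>
    by (intro divide_right_mono) (auto simp: max_def)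
  finally show ?thesis .
qed

lemma Mf_uminus: "Mf (\<lambda>x. - f x) x r = Mf f x r"
  unfolding Mf_def by (simp add: abs_minus_commute)

lemma L_inf_uminus: "L_inf (\<lambda>x. - f x) = L_inf f"
  unfolding L_inf_def Lip_upper_def Mf_uminus ..

lemma Lip_upper_mono_eq:
  assumes "mono f"
  shows "Lip_upper f x = Limsup (at_right 0) (\<lambda>r. ereal (max_slope f x r))"
  unfolding Lip_upper_def
  by (rule Limsup_eq) (auto simp: eventually_at_right_field Mf_mono_eq_max_slope[OF assms] intro!: exI[of _ 1])

lemma lip_lower_mono_eq:
  assumes "mono f"
  shows "lip_lower f x = Liminf (at_right 0) (\<lambda>r. ereal (max_slope f x r))"
  unfolding lip_lower_def
  by (rule Liminf_eq) (auto simp: eventually_at_right_field Mf_mono_eq_max_slope[OF assms] intro!: exI[of _ 1])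

lemma Limsup_at_right_eq_PInf_iff:
  fixes g :: "real \<Rightarrow> real"
  shows "Limsup (at_right 0) (\<lambda>r. ereal (g r)) = \<infinity>
    \<longleftrightarrow> (\<forall>K \<delta>. \<delta> > 0 \<longrightarrow> (\<exists>r. 0 < r \<and> r < \<delta> \<and> K < g r))"
proof -
  have "Limsup (at_right 0) (\<lambda>r. ereal (g r)) \<noteq> \<infinity>
    \<longleftrightarrow> (\<exists>K \<delta>. \<delta> > 0 \<and> (\<forall>r. 0 < r \<and> r < \<delta> \<longrightarrow> g r \<le> K))"
  proof
    assume "Limsup (at_right 0) (\<lambda>r. ereal (g r)) \<noteq> \<infinity>"
    then obtain K where "Limsup (at_right 0) (\<lambda>r. ereal (g r)) \<le> ereal K"
      by (cases "Limsup (at_right 0) (\<lambda>r. ereal (g r))") auto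
    have "eventually (\<lambda>r. ereal (g r) < ereal (K + 1)) (at_right 0)"
      using \<open>Limsup _ _ \<le> ereal K\<close>[unfolded Limsup_le_iff, rule_format, of "ereal (K + 1)"]
      by simp
    then show "\<exists>K \<delta>. \<delta> > 0 \<and> (\<forall>r. 0 < r \<and> r < \<delta> \<longrightarrow> g r \<le> K)"
      unfolding eventually_at_right_field by (force intro: less_imp_le)
  next
    assume "\<exists>K \<delta>. \<delta> > 0 \<and> (\<forall>r. 0 < r \<and> r < \<delta> \<longrightarrow> g r \<le> K)"
    then obtain K \<delta> where "\<delta> > 0" "\<And>r. 0 < r \<Longrightarrow> r < \<delta> \<Longrightarrow> g r \<le> K" by blast
    then have "Limsup (at_right 0) (\<lambda>r. ereal (g r)) \<le> ereal K"
      by (intro Limsup_bounded) (auto simp: eventually_at_right_field)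
    then show "Limsup (at_right 0) (\<lambda>r. ereal (g r)) \<noteq> \<infinity>" by auto
  qed
  then show ?thesis by (meson not_le)
qed

lemma Liminf_at_right_eq_0:
  fixes g :: "real \<Rightarrow> real"
  assumes nonneg: "\<And>r. r > 0 \<Longrightarrow> 0 \<le> g r"
    and small: "\<And>c \<delta>. c > 0 \<Longrightarrow> \<delta> > 0 \<Longrightarrow> \<exists>r. 0 < r \<and> r < \<delta> \<and> g r < c"
  shows "Liminf (at_right 0) (\<lambda>r. ereal (g r)) = 0"
proof (rule antisym)
  show "Liminf (at_right 0) (\<lambda>r. ereal (g r)) \<le> 0"
  proof (rule ccontr)
    assume "\<not> ?thesis"
    then obtain c :: real where "c > 0" "ereal c < Liminf (at_right 0) (\<lambda>r. ereal (g r))"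
      by (metis ereal_dense2 ereal_less(2) less_ereal.simps(1) not_le)
    from this(2) have "eventually (\<lambda>r. ereal c < ereal (g r)) (at_right 0)"
      by (rule less_LiminfD)
    then obtain \<delta> where "\<delta> > 0" "\<And>r. 0 < r \<Longrightarrow> r < \<delta> \<Longrightarrow> c < g r"
      by (auto simp: eventually_at_right_field)
    with small[OF \<open>c > 0\<close>] show False by fastforce
  qed
  show "0 \<le> Liminf (at_right 0) (\<lambda>r. ereal (g r))"
    by (rule Liminf_bounded) (auto simp: eventually_at_right_field nonneg intro!: exI[of _ 1])
qed

lemma L_inf_mono_eq:
  assumes "mono f"
  shows "L_inf f = (\<Inter>n. \<Union>r\<in>{0<..<1 / Suc n}. {x. real n < max_slope f x r})"
proof -
  have "x \<in> L_inf f \<longleftrightarrow> (\<forall>n. \<exists>r. 0 < r \<and> r < 1 / Suc n \<and> real n < max_slope f x r)" for x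
  proof -
    have "x \<in> L_inf f \<longleftrightarrow> (\<forall>K \<delta>. \<delta> > 0 \<longrightarrow> (\<exists>r. 0 < r \<and> r < \<delta> \<and> K < max_slope f x r))"
      unfolding L_inf_def Lip_upper_mono_eq[OF assms] Limsup_at_right_eq_PInf_iff by simp
    also have "\<dots> \<longleftrightarrow> (\<forall>n. \<exists>r. 0 < r \<and> r < 1 / Suc n \<and> real n < max_slope f x r)"
    proof
      assume "\<forall>K \<delta>. \<delta> > 0 \<longrightarrow> (\<exists>r. 0 < r \<and> r < \<delta> \<and> K < max_slope f x r)"
      then show "\<forall>n. \<exists>r. 0 < r \<and> r < 1 / Suc n \<and> real n < max_slope f x r" by simp
    next
      assume H: "\<forall>n. \<exists>r. 0 < r \<and> r < 1 / Suc n \<and> real n < max_slope f x r"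
      show "\<forall>K \<delta>. \<delta> > 0 \<longrightarrow> (\<exists>r. 0 < r \<and> r < \<delta> \<and> K < max_slope f x r)"
      proof (intro allI impI)
        fix K \<delta> :: real
        assume "\<delta> > 0"
        obtain n :: nat where "max K (1 / \<delta>) < n" using reals_Archimedean2 by blast
        then have "K < n" "1 / \<delta> < Suc n" by auto
        then have "1 / Suc n < \<delta>"
          using \<open>\<delta> > 0\<close> by (simp add: divide_less_eq mult.commute)
        moreover obtain r where "0 < r" "r < 1 / Suc n" "real n < max_slope f x r"
          using H by blast
        ultimately show "\<exists>r. 0 < r \<and> r < \<delta> \<and> K < max_slope f x r"
          using \<open>K < n\<close> by (intro exI[of _ r]) auto
      qed
    qed
    finally show ?thesis .
  qed
  then show ?thesis by (simp add: set_eq_iff Bex_def conj_assoc)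
qed

lemma continuous_on_max_slope:
  assumes "continuous_on UNIV f"
  shows "continuous_on UNIV (\<lambda>x. max_slope f x r)"
  unfolding max_slope_def divide_inverse
  by (intro continuous_intros continuous_on_compose2[OF assms]) auto

lemma gdelta_L_inf_mono:
  assumes "mono f" "continuous_on UNIV f"
  shows "gdelta (L_inf f)"
  unfolding L_inf_mono_eq[OF assms(1)]
  by (intro gdelta.intros open_UN ballI open_Collect_less continuous_on_max_slope assms(2)
      continuous_on_const)

section \<open>\<open>L_f^\<infinity>\<close> of a continuous monotone function\<close>

lemma negligible_if_small_lebesgue_cover:
  assumes "\<And>e. e > 0 \<Longrightarrow> \<exists>T. S \<subseteq> T \<and> T \<in> sets lebesgue \<and> emeasure lebesgue T \<le> ennreal e"
  shows "negligible S"
  unfolding negligible_outer_le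
proof (intro allI impI)
  fix e :: real
  assume "e > 0"
  then obtain T where T: "S \<subseteq> T" "T \<in> sets lebesgue" "emeasure lebesgue T \<le> ennreal e"
    using assms by blast
  then have "T \<in> lmeasurable"
    by (intro fmeasurableI) (auto dest: order.strict_trans1[OF _ ennreal_less_top])
  moreover have "measure lebesgue T \<le> e"
    using T \<open>e > 0\<close> by (simp add: measure_def enn2real_leI)
  ultimately show "\<exists>T. S \<subseteq> T \<and> T \<in> lmeasurable \<and> measure lebesgue T \<le> e"
    using T by blast
qed

lemma disjoint_family_on_Ioc_if_disjnt_balls:
  fixes c r :: "'i \<Rightarrow> real"
  assumes "pairwise (\<lambda>i j. disjnt (ball (c i) (r i)) (ball (c j) (r j))) C"
  shows "disjoint_family_on (\<lambda>i. {c i - r i<..c i + r i}) C"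
  unfolding disjoint_family_on_def
proof (intro ballI impI equals0I)
  fix i j x
  assume "i \<in> C" "j \<in> C" "i \<noteq> j" and x: "x \<in> {c i - r i<..c i + r i} \<inter> {c j - r j<..c j + r j}"
  then have "disjnt (ball (c i) (r i)) (ball (c j) (r j))"
    using assms by (auto simp: pairwise_def)
  moreover have "(max (c i - r i) (c j - r j) + x) / 2 \<in> ball (c i) (r i) \<inter> ball (c j) (r j)"
    using x by (auto simp: ball_eq_greaterThanLessThan)
  ultimately show False by (auto simp: disjnt_def)
qed

lemma L_inf_mono_steep_secant:
  assumes "mono f" "x \<in> L_inf f" "\<delta> > 0"
  obtains r where "0 < r" "r < \<delta>" "M * r < f (x + r) - f (x - r)"
proof -
  obtain r where "0 < r" "r < \<delta>" "M < max_slope f x r"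
    using assms(2,3) unfolding L_inf_def Lip_upper_mono_eq[OF assms(1)] Limsup_at_right_eq_PInf_iff
    by blast
  then have "M < (f (x + r) - f (x - r)) / r"
    using max_slope_le_secant[OF assms(1) \<open>0 < r\<close>, of x] by linarith
  with \<open>0 < r\<close> \<open>r < \<delta>\<close> show ?thesis
    by (intro that) (simp_all add: pos_less_divide_eq)
qed

text \<open>Each interval carries at least \<open>M/2\<close> times its length of the Stieltjes measure of \<open>f\<close>,
  and disjoint intervals inside \<open>{a<..b}\<close> carry at most \<open>f b - f a\<close> of it.\<close>

lemma emeasure_UN_steep_intervals_le:
  fixes c r :: "'i \<Rightarrow> real"
  assumes f: "mono f" "continuous_on UNIV f" and "countable C" "M > 0"
    and disj: "disjoint_family_on (\<lambda>i. {c i - r i<..c i + r i}) C"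
    and steep: "\<And>i. i \<in> C \<Longrightarrow> 0 < r i \<and> M * r i < f (c i + r i) - f (c i - r i)"
    and inside: "\<And>i. i \<in> C \<Longrightarrow> {c i - r i<..c i + r i} \<subseteq> {a<..b}"
  shows "emeasure lebesgue (\<Union>i\<in>C. {c i - r i<..c i + r i}) \<le> ennreal (2 / M * (f b - f a))"
proof -
  define I where "I i = {c i - r i<..c i + r i}" for i
  have right_cont: "continuous (at_right x) f" for x
    using f(2) by (simp add: continuous_on_eq_continuous_within continuous_at_imp_continuous_within)
  have F_Ioc: "emeasure (interval_measure f) {x<..y} = ennreal (f y - f x)" if "x \<le> y" for x y
    using that f(1) right_cont by (intro emeasure_interval_measure_Ioc) (auto simp: monoD)
  have "emeasure lebesgue (\<Union>i\<in>C. I i) = (\<integral>\<^sup>+i. emeasure lebesgue (I i) \<partial>count_space C)"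
    by (rule emeasure_UN_countable[OF _ \<open>countable C\<close> disj[folded I_def]]) (simp add: I_def)
  also have "\<dots> \<le> (\<integral>\<^sup>+i. ennreal (2 / M) * emeasure (interval_measure f) (I i) \<partial>count_space C)"
  proof (rule nn_integral_mono)
    fix i
    assume "i \<in> space (count_space C)"
    then have "0 < r i" "M * r i < f (c i + r i) - f (c i - r i)" using steep by auto
    then have "2 * r i \<le> 2 / M * (f (c i + r i) - f (c i - r i))"
      using \<open>M > 0\<close> by (simp add: field_simps)
    moreover have "0 \<le> f (c i + r i) - f (c i - r i)"
      using \<open>0 < r i\<close> \<open>M > 0\<close> \<open>M * r i < _\<close> by (smt (verit) mult_pos_pos)
    ultimately show "emeasure lebesgue (I i) \<le> ennreal (2 / M) * emeasure (interval_measure f) (I i)"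
      using \<open>0 < r i\<close> \<open>M > 0\<close> F_Ioc[of "c i - r i" "c i + r i"]
      by (simp add: I_def ennreal_mult[symmetric] ennreal_leI del: times_divide_eq_left)
  qed
  also have "\<dots> = ennreal (2 / M) * emeasure (interval_measure f) (\<Union>i\<in>C. I i)"
    by (subst nn_integral_cmult, simp, subst emeasure_UN_countable[OF _ \<open>countable C\<close> disj[folded I_def]])
      (simp_all add: I_def)
  also have "\<dots> \<le> ennreal (2 / M) * emeasure (interval_measure f) {a<..b}"
    using inside by (intro mult_left_mono emeasure_mono) (auto simp: I_def)
  also have "\<dots> \<le> ennreal (2 / M * (f b - f a))"
  proof (cases "a \<le> b")
    case True
    then show ?thesis
      using \<open>M > 0\<close> f(1) by (simp add: F_Ioc ennreal_mult[symmetric] monoD del: times_divide_eq_left)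
  qed simp
  finally show ?thesis by (simp add: I_def)
qed

lemma negligible_L_inf_Int_ball:
  assumes mono: "mono f" and cont: "continuous_on UNIV f"
  shows "negligible (L_inf f \<inter> ball 0 R)"
proof (rule negligible_if_small_lebesgue_cover)
  fix e :: real
  assume "e > 0"
  define S where "S = L_inf f \<inter> ball 0 R"
  define B where "B = f (\<bar>R\<bar> + 1) - f (- \<bar>R\<bar> - 1)"
  define M where "M = 2 * (B + 1) / e"
  have "B \<ge> 0" using mono by (simp add: B_def monoD)
  then have "M > 0" using \<open>e > 0\<close> by (simp add: M_def)
  define K where "K = {(x, r). x \<in> S \<and> 0 < r \<and> r < 1 \<and> M * r < f (x + r) - f (x - r)}"
  have fine: "\<exists>i. i \<in> K \<and> x \<in> ball (fst i) (snd i) \<and> snd i < d" if "x \<in> S" "d > 0" for x d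
  proof -
    have "x \<in> L_inf f" "min d 1 > 0" using that by (auto simp: S_def)
    then obtain r where "0 < r" "r < min d 1" "M * r < f (x + r) - f (x - r)"
      by (rule L_inf_mono_steep_secant[OF mono])
    with that(1) show ?thesis
      by (intro exI[of _ "(x, r)"]) (auto simp: K_def)
  qed
  obtain C where "countable C" "C \<subseteq> K"
    and pw: "pairwise (\<lambda>i j. disjnt (ball (fst i) (snd i)) (ball (fst j) (snd j))) C"
    and rest: "negligible (S - (\<Union>i\<in>C. ball (fst i) (snd i)))"
    using Vitali_covering_theorem_balls[of S K fst snd, OF fine] by blast
  define I where "I = (\<Union>i\<in>C. {fst i - snd i<..fst i + snd i})"
  have disj: "disjoint_family_on (\<lambda>i. {fst i - snd i<..fst i + snd i}) C"
    using pw by (rule disjoint_family_on_Ioc_if_disjnt_balls)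
  have "emeasure lebesgue I \<le> ennreal (2 / M * B)"
    unfolding I_def B_def
  proof (rule emeasure_UN_steep_intervals_le[OF mono cont \<open>countable C\<close> \<open>M > 0\<close> disj])
    fix i
    assume "i \<in> C"
    then have "i \<in> K" using \<open>C \<subseteq> K\<close> by blast
    then show "0 < snd i \<and> M * snd i < f (fst i + snd i) - f (fst i - snd i)"
      and "{fst i - snd i<..fst i + snd i} \<subseteq> {- \<bar>R\<bar> - 1<..\<bar>R\<bar> + 1}"
      by (auto simp: K_def S_def)
  qed
  also have "\<dots> \<le> ennreal e"
    using \<open>e > 0\<close> \<open>B \<ge> 0\<close> by (intro ennreal_leI) (simp add: M_def field_simps)
  finally have "emeasure lebesgue I \<le> ennreal e" .
  have "I \<in> sets lebesgue"
    using \<open>countable C\<close> unfolding I_def by (intro sets.countable_UN') auto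
  moreover have "S - (\<Union>i\<in>C. ball (fst i) (snd i)) \<in> null_sets lebesgue"
    using rest negligible_iff_null_sets by blast
  ultimately have "emeasure lebesgue (I \<union> (S - (\<Union>i\<in>C. ball (fst i) (snd i)))) \<le> ennreal e"
    using \<open>emeasure lebesgue I \<le> ennreal e\<close> by (simp only: emeasure_Un_null_set)
  moreover have "S \<subseteq> I \<union> (S - (\<Union>i\<in>C. ball (fst i) (snd i)))"
    by (auto simp: I_def ball_eq_greaterThanLessThan)
  ultimately show "\<exists>T. L_inf f \<inter> ball 0 R \<subseteq> T \<and> T \<in> sets lebesgue \<and> emeasure lebesgue T \<le> ennreal e"
    using \<open>I \<in> sets lebesgue\<close> \<open>S - _ \<in> null_sets lebesgue\<close> unfolding S_def by blast
qed

lemma null_sets_L_inf_mono: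
  assumes "mono f" "continuous_on UNIV f"
  shows "L_inf f \<in> null_sets lebesgue"
proof -
  have "x \<in> (\<Union>n. ball 0 (real n))" for x :: real
    using reals_Archimedean2[of "\<bar>x\<bar>"] by auto
  then have "L_inf f = (\<Union>n. L_inf f \<inter> ball 0 (real n))" by blast
  moreover have "negligible (\<Union>n. L_inf f \<inter> ball 0 (real n))"
    using negligible_L_inf_Int_ball[OF assms] by (intro negligible_Union_nat)
  ultimately show ?thesis by (metis negligible_iff_null_sets)
qed

section \<open>Open covers of a null set that are thin near a complement\<close>

definition sparse_near_compl :: "real set \<Rightarrow> real \<Rightarrow> real set \<Rightarrow> bool" where
  "sparse_near_compl U \<epsilon> V \<longleftrightarrow> (\<forall>x \<rho> z. 0 < \<rho> \<longrightarrow> z \<notin> U \<longrightarrow> dist x z < 5 * \<rho> \<longrightarrow>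
     emeasure lebesgue (V \<inter> {x - \<rho><..x + \<rho>}) \<le> ennreal (\<epsilon> * \<rho>))"

lemma sparse_near_compl_mono:
  "sparse_near_compl U \<epsilon> V \<Longrightarrow> U \<subseteq> U' \<Longrightarrow> sparse_near_compl U' \<epsilon> V"
  unfolding sparse_near_compl_def by blast

lemma open_Collect_ball_subset: "open {t. \<exists>r>s. ball t r \<subseteq> U}"
proof (rule openI)
  fix t
  assume "t \<in> {t. \<exists>r>s. ball t r \<subseteq> U}"
  then obtain r where "r > s" "ball t r \<subseteq> U" by blast
  have "ball t' (r - dist t t') \<subseteq> U" for t'
  proof
    fix y
    assume "y \<in> ball t' (r - dist t t')"
    then have "dist t y < r" using dist_triangle[of t y t'] by simp
    then show "y \<in> U" using \<open>ball t r \<subseteq> U\<close> by auto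
  qed
  moreover have "r - dist t t' > s" if "t' \<in> ball t (r - s)" for t'
    using that by simp
  ultimately have "ball t (r - s) \<subseteq> {t. \<exists>r>s. ball t r \<subseteq> U}"
    by blast
  with \<open>r > s\<close> show "\<exists>e>0. ball t e \<subseteq> {t. \<exists>r>s. ball t r \<subseteq> U}"
    by (intro exI[of _ "r - s"]) simp
qed

definition grid_cell :: "real set \<Rightarrow> nat \<Rightarrow> int \<Rightarrow> real set" where
  "grid_cell U k j = {t. \<exists>r > (1/2) ^ k. ball t r \<subseteq> U} \<inter> {j * (1/2) ^ k<..<(j + 2) * (1/2) ^ k}"

lemma open_grid_cell: "open (grid_cell U k j)"
  by (simp add: grid_cell_def open_Collect_ball_subset open_Int)

lemma grid_cell_subset: "grid_cell U k j \<subseteq> U"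
proof
  fix t
  assume "t \<in> grid_cell U k j"
  then obtain r where "r > (1/2) ^ k" "ball t r \<subseteq> U" by (auto simp: grid_cell_def)
  moreover have "(0::real) < (1/2) ^ k" by simp
  ultimately show "t \<in> U" by (meson centre_in_ball less_trans subsetD)
qed

lemma UN_grid_cell:
  assumes "open U"
  shows "(\<Union>k j. grid_cell U k j) = U"
proof (intro antisym subsetI)
  fix t
  assume "t \<in> U"
  then obtain r where "r > 0" "ball t r \<subseteq> U" using assms open_contains_ball by blast
  obtain k where "(1/2::real) ^ k < r" using real_arch_pow_inv[OF \<open>r > 0\<close>, of "1/2"] by auto
  let ?s = "(1/2::real) ^ k"
  have "\<lfloor>t / ?s\<rfloor> * ?s \<le> t" "t < (\<lfloor>t / ?s\<rfloor> + 1) * ?s"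
    using floor_divide_lower[of ?s t] floor_divide_upper[of ?s t] by simp_all
  then have "t \<in> {(\<lfloor>t / ?s\<rfloor> - 1) * ?s<..<(real_of_int (\<lfloor>t / ?s\<rfloor> - 1) + 2) * ?s}"
    by (simp add: algebra_simps)
  moreover have "t \<in> {t. \<exists>r > ?s. ball t r \<subseteq> U}"
    using \<open>ball t r \<subseteq> U\<close> \<open>?s < r\<close> by blast
  ultimately have "t \<in> grid_cell U k (\<lfloor>t / ?s\<rfloor> - 1)"
    unfolding grid_cell_def by blast
  then show "t \<in> (\<Union>k j. grid_cell U k j)" by blast
qed (use grid_cell_subset in blast)

lemma card_grid_cells_meeting_interval:
  fixes s x \<rho> :: real
  assumes "s > 0" "\<rho> \<ge> 0"
  defines "J \<equiv> {j::int. j * s < x + \<rho> \<and> x - \<rho> < (j + 2) * s}"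
  shows "finite J" "real (card J) \<le> 2 * \<rho> / s + 3"
proof -
  define lo where "lo = \<lfloor>(x - \<rho>) / s\<rfloor> - 1"
  define hi where "hi = \<lfloor>(x + \<rho>) / s\<rfloor>"
  have "J \<subseteq> {lo..hi}"
  proof
    fix j
    assume "j \<in> J"
    then have "j < (x + \<rho>) / s" "(x - \<rho>) / s < j + 2"
      using assms(1) by (simp_all add: J_def pos_less_divide_eq pos_divide_less_eq)
    then have "j \<le> hi" "\<lfloor>(x - \<rho>) / s\<rfloor> < j + 2"
      unfolding hi_def by (simp_all add: le_floor_iff floor_less_iff)
    then show "j \<in> {lo..hi}" by (simp add: lo_def)
  qed
  then show "finite J" by (rule finite_subset) simp
  have "real (card J) \<le> real (card {lo..hi})"
    using card_mono[OF finite_atLeastAtMost_int \<open>J \<subseteq> {lo..hi}\<close>] by (simp only: of_nat_le_iff)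
  also have "\<dots> \<le> (x + \<rho>) / s - (x - \<rho>) / s + 3"
  proof (cases "lo \<le> hi")
    case True
    then have "real (card {lo..hi}) = hi - lo + 1" by simp
    moreover have "real_of_int hi \<le> (x + \<rho>) / s" "(x - \<rho>) / s - 1 < \<lfloor>(x - \<rho>) / s\<rfloor>"
      unfolding hi_def by linarith+
    ultimately show ?thesis unfolding lo_def by linarith
  next
    case False
    have "(x - \<rho>) / s \<le> (x + \<rho>) / s"
      using assms by (simp add: divide_right_mono)
    with False show ?thesis by simp
  qed
  also have "\<dots> = 2 * \<rho> / s + 3"
    using assms(1) by (simp add: field_simps)
  finally show "real (card J) \<le> 2 * \<rho> / s + 3" .
qed

lemma suminf_ennreal_geometric:
  assumes "c \<ge> 0" "0 \<le> q" "q < 1"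
  shows "(\<Sum>k. ennreal (c * q ^ k)) = ennreal (c / (1 - q))"
proof (rule suminf_ennreal_eq)
  show "0 \<le> c * q ^ k" for k using assms by simp
  show "(\<lambda>k. c * q ^ k) sums (c / (1 - q))"
    using sums_mult[OF geometric_sums[of q], of c] assms by simp
qed

lemma emeasure_UN_int_le:
  fixes A :: "int \<Rightarrow> 'a set"
  assumes "range A \<subseteq> sets M" "c \<ge> 0"
    and A: "\<And>j. emeasure M (A j) \<le> ennreal (c * (1/2) ^ nat \<bar>j\<bar>)"
  shows "emeasure M (\<Union>j. A j) \<le> ennreal (3 * c)"
proof -
  have "(\<Union>j. A j) = (\<Union>n. A (int n) \<union> A (- int n - 1))"
  proof (intro set_eqI iffI)
    fix t
    assume "t \<in> (\<Union>j. A j)"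
    then obtain j where "t \<in> A j" by blast
    moreover have "\<exists>n. j = int n \<or> j = - int n - 1"
      by (cases "j \<ge> 0") (rule exI[of _ "nat j"], simp, rule exI[of _ "nat (- j - 1)"], simp)
    then obtain n where "j = int n \<or> j = - int n - 1" by blast
    ultimately show "t \<in> (\<Union>n. A (int n) \<union> A (- int n - 1))" by auto
  qed auto
  also have "emeasure M \<dots> \<le> (\<Sum>n. emeasure M (A (int n) \<union> A (- int n - 1)))"
    using assms(1) by (intro emeasure_subadditive_countably) auto
  also have "\<dots> \<le> (\<Sum>n. ennreal (3 / 2 * c * (1/2) ^ n))"
  proof (intro suminf_le allI)
    fix n
    have "nat \<bar>- int n - 1\<bar> = Suc n" by simp
    have "emeasure M (A (int n) \<union> A (- int n - 1)) \<le> emeasure M (A (int n)) + emeasure M (A (- int n - 1))"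
      using assms(1) by (intro emeasure_subadditive) auto
    also have "\<dots> \<le> ennreal (c * (1/2) ^ n) + ennreal (c * (1/2) ^ Suc n)"
      using A[of "int n"] A[of "- int n - 1", unfolded \<open>nat \<bar>- int n - 1\<bar> = Suc n\<close>]
      by (intro add_mono) simp_all
    also have "\<dots> = ennreal (c * (1/2) ^ n + c * (1/2) ^ Suc n)"
      using assms(2) by (intro ennreal_plus[symmetric]) auto
    also have "c * (1/2) ^ n + c * (1/2) ^ Suc n = 3 / 2 * c * (1/2) ^ n"
      by simp
    finally show "emeasure M (A (int n) \<union> A (- int n - 1)) \<le> ennreal (3 / 2 * c * (1/2) ^ n)" .
  qed auto
  also have "\<dots> = ennreal (3 / 2 * c / (1 - 1/2))"
    using assms(2) by (intro suminf_ennreal_geometric) auto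
  finally show ?thesis by simp
qed

lemma null_set_open_cover:
  assumes "N \<in> null_sets lebesgue" "e > 0"
  obtains T where "open T" "N \<subseteq> T" "emeasure lebesgue T \<le> ennreal e"
proof -
  obtain T where T: "open T" "N \<subseteq> T" "emeasure lebesgue (T - N) < ennreal e"
    using sets_lebesgue_outer_open[OF null_setsD2[OF assms(1)] assms(2)] by metis
  have "emeasure lebesgue T \<le> emeasure lebesgue N + emeasure lebesgue (T - N)"
    by (rule emeasure_subadditive[of N lebesgue "T - N", simplified Un_absorb1[OF \<open>N \<subseteq> T\<close>] Un_Diff_cancel])
       (use assms T in auto)
  also have "\<dots> \<le> ennreal e" using T(3) null_setsD1[OF assms(1)] by simp
  finally show ?thesis using T that by blast
qed

locale grid_cover =
  fixes U :: "real set" and \<theta> :: real and W :: "nat \<Rightarrow> int \<Rightarrow> real set"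
  assumes theta_nonneg: "\<theta> \<ge> 0"
    and W_sets: "\<And>k j. W k j \<in> sets lebesgue"
    and W_subset: "\<And>k j. W k j \<subseteq> grid_cell U k j"
    and W_small: "\<And>k j. emeasure lebesgue (W k j) \<le> ennreal (\<theta> * (1/4) ^ k * (1/2) ^ nat \<bar>j\<bar>)"
begin

lemma emeasure_UN_le: "emeasure lebesgue (\<Union>k j. W k j) \<le> ennreal (4 * \<theta>)"
proof -
  have "emeasure lebesgue (\<Union>k j. W k j) \<le> (\<Sum>k. emeasure lebesgue (\<Union>j. W k j))"
    using W_sets by (intro emeasure_subadditive_countably) auto
  also have "\<dots> \<le> (\<Sum>k. ennreal (3 * (\<theta> * (1/4) ^ k)))"
    by (intro suminf_le allI emeasure_UN_int_le W_small) (use W_sets theta_nonneg in auto)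
  also have "\<dots> = (\<Sum>k. ennreal (3 * \<theta> * (1/4) ^ k))"
    by (simp add: mult.assoc)
  also have "\<dots> = ennreal (3 * \<theta> / (1 - 1/4))"
    using theta_nonneg by (intro suminf_ennreal_geometric) auto
  finally show ?thesis by simp
qed

lemma W_Int_near_interval_eq_empty:
  assumes "z \<notin> U" "dist x z < 5 * \<rho>" "6 * \<rho> \<le> (1/2) ^ k"
  shows "W k j \<inter> {x - \<rho><..x + \<rho>} = {}"
proof (intro equals0I)
  fix t
  assume t: "t \<in> W k j \<inter> {x - \<rho><..x + \<rho>}"
  with W_subset[of k j] obtain r where "r > (1/2) ^ k" "ball t r \<subseteq> U"
    unfolding grid_cell_def by blast
  with \<open>z \<notin> U\<close> have "r \<le> dist t z" by (meson mem_ball not_le subsetD)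
  moreover have "dist t z \<le> dist t x + dist x z" by (rule dist_triangle)
  ultimately show False
    using t assms(2,3) \<open>r > (1/2) ^ k\<close> by (auto simp: dist_real_def)
qed

text \<open>A point of a level-\<open>k\<close> cell lies at distance more than \<open>(1/2)^k\<close> from \<open>z \<notin> U\<close>, so only
  levels with \<open>(1/2)^k < 6\<rho>\<close> meet the interval, and there only \<open>O(\<rho> 2^k)\<close> cells do.\<close>

lemma emeasure_level_Int_le:
  assumes "0 < \<rho>" "z \<notin> U" "dist x z < 5 * \<rho>"
  shows "emeasure lebesgue ((\<Union>j. W k j) \<inter> {x - \<rho><..x + \<rho>}) \<le> ennreal (20 * \<theta> * \<rho> * (1/2) ^ k)"
proof (cases "(1/2::real) ^ k < 6 * \<rho>")
  case False
  then have "(\<Union>j. W k j) \<inter> {x - \<rho><..x + \<rho>} = {}"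
    using W_Int_near_interval_eq_empty[OF assms(2,3)] by (auto simp: not_less)
  then show ?thesis by simp
next
  case True
  define s :: real where "s = (1/2) ^ k"
  define J where "J = {j::int. j * s < x + \<rho> \<and> x - \<rho> < (j + 2) * s}"
  have "s > 0" by (simp add: s_def)
  have "finite J" and card_J: "real (card J) \<le> 2 * \<rho> / s + 3"
    using card_grid_cells_meeting_interval[OF \<open>s > 0\<close>, of \<rho> x] assms(1) by (simp_all add: J_def)
  have "(\<Union>j. W k j) \<inter> {x - \<rho><..x + \<rho>} \<subseteq> (\<Union>j\<in>J. W k j)"
  proof
    fix t
    assume "t \<in> (\<Union>j. W k j) \<inter> {x - \<rho><..x + \<rho>}"
    then obtain j where "t \<in> W k j" "x - \<rho> < t" "t \<le> x + \<rho>" by auto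
    moreover from \<open>t \<in> W k j\<close> have "j * s < t" "t < (j + 2) * s"
      using W_subset[of k j] by (auto simp: s_def grid_cell_def)
    ultimately show "t \<in> (\<Union>j\<in>J. W k j)"
      unfolding J_def by (intro UN_I[of j]) auto
  qed
  then have "emeasure lebesgue ((\<Union>j. W k j) \<inter> {x - \<rho><..x + \<rho>}) \<le> emeasure lebesgue (\<Union>j\<in>J. W k j)"
    using W_sets \<open>finite J\<close> by (intro emeasure_mono) auto
  also have "\<dots> \<le> (\<Sum>j\<in>J. emeasure lebesgue (W k j))"
    using W_sets \<open>finite J\<close> by (intro emeasure_subadditive_finite) auto
  also have "\<dots> \<le> (\<Sum>j\<in>J. ennreal (\<theta> * (1/4) ^ k))"
  proof (rule sum_mono)
    fix j
    have "\<theta> * (1/4) ^ k * (1/2) ^ nat \<bar>j\<bar> \<le> \<theta> * (1/4) ^ k"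
      using theta_nonneg by (simp add: mult_left_le power_le_one)
    then show "emeasure lebesgue (W k j) \<le> ennreal (\<theta> * (1/4) ^ k)"
      using W_small[of k j] by (meson ennreal_leI order_trans)
  qed
  also have "\<dots> = ennreal (card J * (\<theta> * (1/4) ^ k))"
    using theta_nonneg by (simp add: ennreal_mult ennreal_of_nat_eq_real_of_nat)
  also have "\<dots> \<le> ennreal (20 * \<theta> * \<rho> * (1/2) ^ k)"
  proof (rule ennreal_leI)
    have quarter: "(1/4::real) ^ k = s * s"
      by (simp add: s_def power_mult_distrib[symmetric])
    have "card J * (\<theta> * (1/4) ^ k) \<le> (2 * \<rho> / s + 3) * (\<theta> * (s * s))"
      using card_J theta_nonneg unfolding quarter by (intro mult_right_mono) auto
    also have "\<dots> = \<theta> * s * (2 * \<rho> + 3 * s)"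
      using \<open>s > 0\<close> by (simp add: field_simps)
    also have "\<dots> \<le> \<theta> * s * (20 * \<rho>)"
      using True theta_nonneg \<open>s > 0\<close> by (intro mult_left_mono) (auto simp: s_def)
    finally show "card J * (\<theta> * (1/4) ^ k) \<le> 20 * \<theta> * \<rho> * (1/2) ^ k"
      by (simp add: s_def mult_ac)
  qed
  finally show ?thesis .
qed

lemma sparse_near_compl_UN: "sparse_near_compl U (40 * \<theta>) (\<Union>k j. W k j)"
  unfolding sparse_near_compl_def
proof (intro allI impI)
  fix x \<rho> z
  assume "0 < \<rho>" "z \<notin> U" "dist x z < 5 * \<rho>"
  have "(\<Union>k j. W k j) \<inter> {x - \<rho><..x + \<rho>} = (\<Union>k. (\<Union>j. W k j) \<inter> {x - \<rho><..x + \<rho>})"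
    by blast
  also have "emeasure lebesgue \<dots> \<le> (\<Sum>k. emeasure lebesgue ((\<Union>j. W k j) \<inter> {x - \<rho><..x + \<rho>}))"
    using W_sets by (intro emeasure_subadditive_countably) auto
  also have "\<dots> \<le> (\<Sum>k. ennreal (20 * \<theta> * \<rho> * (1/2) ^ k))"
    using emeasure_level_Int_le[OF \<open>0 < \<rho>\<close> \<open>z \<notin> U\<close> \<open>dist x z < 5 * \<rho>\<close>] by (intro suminf_le) auto
  also have "\<dots> = ennreal (20 * \<theta> * \<rho> / (1 - 1/2))"
    using theta_nonneg \<open>0 < \<rho>\<close> by (intro suminf_ennreal_geometric) auto
  finally show "emeasure lebesgue ((\<Union>k j. W k j) \<inter> {x - \<rho><..x + \<rho>}) \<le> ennreal (40 * \<theta> * \<rho>)"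
    by (simp add: mult.assoc)
qed

end

lemma sparse_open_cover:
  assumes "open U" "E \<subseteq> U" "E \<in> null_sets lebesgue" "\<epsilon> > 0"
  obtains V where "open V" "E \<subseteq> V" "V \<subseteq> U" "emeasure lebesgue V \<le> ennreal \<epsilon>"
    "sparse_near_compl U \<epsilon> V"
proof -
  define \<theta> where "\<theta> = \<epsilon> / 40"
  have "\<exists>W. open W \<and> E \<inter> grid_cell U k j \<subseteq> W \<and> W \<subseteq> grid_cell U k j
      \<and> emeasure lebesgue W \<le> ennreal (\<theta> * (1/4) ^ k * (1/2) ^ nat \<bar>j\<bar>)" for k j
  proof -
    have "E \<inter> grid_cell U k j \<in> null_sets lebesgue"
      using assms(3) open_grid_cell by (intro null_set_Int2) auto
    then obtain T where "open T" "E \<inter> grid_cell U k j \<subseteq> T"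
        "emeasure lebesgue T \<le> ennreal (\<theta> * (1/4) ^ k * (1/2) ^ nat \<bar>j\<bar>)"
      using null_set_open_cover[of "E \<inter> grid_cell U k j" "\<theta> * (1/4) ^ k * (1/2) ^ nat \<bar>j\<bar>"] assms(4)
      by (auto simp: \<theta>_def)
    moreover have "emeasure lebesgue (T \<inter> grid_cell U k j) \<le> emeasure lebesgue T"
      using \<open>open T\<close> by (intro emeasure_mono) auto
    ultimately show ?thesis
      using open_grid_cell by (intro exI[of _ "T \<inter> grid_cell U k j"]) auto
  qed
  then obtain W where W_open: "\<And>k j. open (W k j)" and W_cover: "\<And>k j. E \<inter> grid_cell U k j \<subseteq> W k j"
    and W_subset: "\<And>k j. W k j \<subseteq> grid_cell U k j"
    and W_small: "\<And>k j. emeasure lebesgue (W k j) \<le> ennreal (\<theta> * (1/4) ^ k * (1/2) ^ nat \<bar>j\<bar>)"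
    by metis
  interpret grid_cover U \<theta> W
    using W_subset W_small W_open assms(4) by unfold_locales (auto simp: \<theta>_def)
  show ?thesis
  proof (rule that)
    show "open (\<Union>k j. W k j)"
      using W_open by blast
    show "E \<subseteq> (\<Union>k j. W k j)"
    proof
      fix t
      assume "t \<in> E"
      with assms(2) UN_grid_cell[OF assms(1)] obtain k j where "t \<in> grid_cell U k j" by blast
      with \<open>t \<in> E\<close> W_cover[of k j] show "t \<in> (\<Union>k j. W k j)" by blast
    qed
    show "(\<Union>k j. W k j) \<subseteq> U"
      using W_subset grid_cell_subset by blast
    show "emeasure lebesgue (\<Union>k j. W k j) \<le> ennreal \<epsilon>"
      using emeasure_UN_le assms(4) by (simp add: \<theta>_def) (erule order_trans; simp)
    show "sparse_near_compl U \<epsilon> (\<Union>k j. W k j)"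
      using sparse_near_compl_UN by (simp add: \<theta>_def)
  qed
qed

section \<open>A monotone function with prescribed \<open>L_f^\<infinity>\<close>\<close>

definition layer_eps :: "nat \<Rightarrow> real" where
  "layer_eps m = (1/4) ^ m / (m + 1)"

definition layer_coef :: "nat \<Rightarrow> real" where
  "layer_coef m = (if odd m then real m else 0)"

lemma layer_eps_pos: "layer_eps m > 0"
  by (simp add: layer_eps_def)

lemma layer_eps_le_1: "layer_eps m \<le> 1"
proof -
  have "(1/4::real) ^ m \<le> 1 * (m + 1)"
    by (rule order_trans[OF power_le_one]) auto
  then show ?thesis by (simp add: layer_eps_def divide_le_eq)
qed

lemma layer_coef_nonneg: "layer_coef m \<ge> 0"
  by (simp add: layer_coef_def)

lemma layer_coef_le: "layer_coef m \<le> real m"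
  by (simp add: layer_coef_def)

lemma layer_coef_mult_eps_le: "layer_coef m * layer_eps m \<le> (1/4) ^ m"
proof -
  have "layer_coef m * layer_eps m \<le> real m * layer_eps m"
    using layer_coef_le layer_eps_pos by (intro mult_right_mono) (auto simp: less_imp_le)
  also have "\<dots> = (real m / (m + 1)) * (1/4) ^ m" by (simp add: layer_eps_def)
  also have "\<dots> \<le> 1 * (1/4) ^ m" by (intro mult_right_mono) auto
  finally show ?thesis by simp
qed

lemma quarter_power_le: "m \<ge> N \<Longrightarrow> (1/4::real) ^ m \<le> (1/2) ^ N * (1/2) ^ m"
proof -
  assume "m \<ge> N"
  have "(1/4::real) ^ m = (1/2) ^ m * (1/2) ^ m" by (simp add: power_mult_distrib[symmetric])
  also have "\<dots> \<le> (1/2) ^ N * (1/2) ^ m"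
    using \<open>m \<ge> N\<close> by (intro mult_right_mono power_decreasing) auto
  finally show ?thesis .
qed

lemma suminf_le_finite_plus_geometric:
  fixes g :: "nat \<Rightarrow> real"
  assumes g: "\<And>m. 0 \<le> g m" "\<And>m. g m \<le> (if m < N then c else 0) + K * (1/2) ^ m"
    and "0 \<le> c" "0 \<le> K"
  shows "summable g" "suminf g \<le> real N * c + 2 * K"
proof -
  define h where "h m = (if m < N then c else 0) + K * (1/2::real) ^ m" for m
  have "(\<lambda>m. if m < N then c else 0) sums (real N * c)"
    using sums_If_finite_set[of "{..<N}" "\<lambda>_. c"] by (simp add: lessThan_def)
  moreover have "(\<lambda>m. K * (1/2::real) ^ m) sums (2 * K)"
    using sums_mult[OF geometric_sums[of "1/2::real"], of K] by (simp add: mult.commute)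
  ultimately have h: "h sums (real N * c + 2 * K)"
    unfolding h_def by (rule sums_add)
  have "\<exists>N. \<forall>n\<ge>N. norm (g n) \<le> h n"
    using g unfolding h_def by simp
  then show "summable g"
    using sums_summable[OF h] by (rule summable_comparison_test)
  have "suminf g \<le> suminf h"
    using g \<open>summable g\<close> sums_summable[OF h] unfolding h_def by (intro suminf_le) auto
  then show "suminf g \<le> real N * c + 2 * K"
    using h by (simp add: sums_iff)
qed

locale layered_null_set =
  fixes E :: "real set" and G :: "nat \<Rightarrow> real set"
  assumes open_G: "\<And>m. open (G m)"
    and G_Suc_subset: "\<And>m. G (Suc m) \<subseteq> G m"
    and E_subset_G: "\<And>m. E \<subseteq> G m"
    and Inter_G_subset: "(\<Inter>m. G m) \<subseteq> E"
    and E_null: "E \<in> null_sets lebesgue"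
    and emeasure_G_Suc: "\<And>m. emeasure lebesgue (G (Suc m)) \<le> ennreal (layer_eps (Suc m))"
    and sparse_G_Suc: "\<And>m. sparse_near_compl (G m) (layer_eps (Suc m)) (G (Suc m))"
begin

definition layer :: "nat \<Rightarrow> real set" where
  "layer m = G m - G (Suc m)"

definition F :: "real \<Rightarrow> real" where
  "F x = (\<Sum>m. layer_coef m * measure lebesgue (layer m \<inter> {..x}))"

lemma G_antimono: "m \<le> n \<Longrightarrow> G n \<subseteq> G m"
  by (induction n rule: dec_induct) (use G_Suc_subset in auto)

lemma G_sets: "G m \<in> sets lebesgue"
  using open_G by simp

lemma layer_sets: "layer m \<in> sets lebesgue"
  unfolding layer_def by (intro sets.Diff G_sets)

lemma emeasure_G_le: "m \<ge> 1 \<Longrightarrow> emeasure lebesgue (G m) \<le> ennreal (layer_eps m)"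
  using emeasure_G_Suc[of "m - 1"] by simp

lemma emeasure_layer_Int_le:
  assumes "m \<ge> 1"
  shows "emeasure lebesgue (layer m \<inter> S) \<le> ennreal (layer_eps m)"
proof -
  have "emeasure lebesgue (layer m \<inter> S) \<le> emeasure lebesgue (G m)"
    by (rule emeasure_mono) (auto simp: layer_def G_sets)
  also have "\<dots> \<le> ennreal (layer_eps m)"
    using emeasure_G_le[OF assms] .
  finally show ?thesis .
qed

lemma emeasure_layer_Int_finite: "m \<ge> 1 \<Longrightarrow> emeasure lebesgue (layer m \<inter> S) \<noteq> \<infinity>"
  using emeasure_layer_Int_le[of m S] ennreal_less_top[of "layer_eps m"] by (auto simp: top_unique)

lemma layer_term_le:
  "layer_coef m * measure lebesgue (layer m \<inter> S) \<le> (1/4) ^ m"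
proof (cases "m = 0")
  case False
  have "measure lebesgue (layer m \<inter> S) \<le> layer_eps m"
    using emeasure_layer_Int_le[of m S] False layer_eps_pos
    by (simp add: measure_def enn2real_leI less_imp_le)
  then have "layer_coef m * measure lebesgue (layer m \<inter> S) \<le> layer_coef m * layer_eps m"
    using layer_coef_nonneg by (rule mult_left_mono)
  then show ?thesis using layer_coef_mult_eps_le order_trans by blast
qed (simp add: layer_coef_def)

lemma layer_term_nonneg: "0 \<le> layer_coef m * measure lebesgue (layer m \<inter> S)"
  using layer_coef_nonneg by simp

lemma summable_layer_terms: "summable (\<lambda>m. layer_coef m * measure lebesgue (layer m \<inter> S))"
proof (rule suminf_le_finite_plus_geometric(1)[where N = 0 and c = 0 and K = 1])
  fix m
  have "(1/4::real) ^ m \<le> (1/2) ^ m" by (rule power_mono) auto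
  then show "layer_coef m * measure lebesgue (layer m \<inter> S) \<le> (if m < 0 then 0 else 0) + 1 * (1/2) ^ m"
    using layer_term_le[of m S] by simp
qed (auto intro: layer_term_nonneg)

lemma F_diff:
  assumes "x \<le> y"
  shows "F y - F x = (\<Sum>m. layer_coef m * measure lebesgue (layer m \<inter> {x<..y}))"
proof -
  have split: "layer_coef m * measure lebesgue (layer m \<inter> {..y})
      = layer_coef m * measure lebesgue (layer m \<inter> {..x}) + layer_coef m * measure lebesgue (layer m \<inter> {x<..y})"
    for m
  proof (cases "m = 0")
    case False
    have "layer m \<inter> {..y} = (layer m \<inter> {..x}) \<union> (layer m \<inter> {x<..y})" using assms by auto
    moreover have "measure lebesgue ((layer m \<inter> {..x}) \<union> (layer m \<inter> {x<..y}))
        = measure lebesgue (layer m \<inter> {..x}) + measure lebesgue (layer m \<inter> {x<..y})"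
      using emeasure_layer_Int_finite[of m] False layer_sets[of m] by (intro measure_Union) auto
    ultimately show ?thesis by (simp add: distrib_left)
  qed (simp add: layer_coef_def)
  show ?thesis
    unfolding F_def split by (subst suminf_add[symmetric]) (auto intro: summable_layer_terms)
qed

lemma F_mono: "mono F"
proof (rule monoI)
  fix x y :: real
  assume "x \<le> y"
  have "0 \<le> (\<Sum>m. layer_coef m * measure lebesgue (layer m \<inter> {x<..y}))"
    by (intro suminf_nonneg summable_layer_terms layer_term_nonneg)
  then show "F x \<le> F y" using F_diff[OF \<open>x \<le> y\<close>] by simp
qed

lemma F_increment:
  assumes "r > 0"
  shows "F (x + r) - F (x - r) = (\<Sum>m. layer_coef m * measure lebesgue (layer m \<inter> {x - r<..x + r}))"
  using F_diff[of "x - r" "x + r"] assms by simp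

lemma measure_layer_Int_Ioc_le:
  assumes "r \<ge> 0"
  shows "measure lebesgue (layer m \<inter> {x - r<..x + r}) \<le> 2 * r"
proof -
  have "emeasure lebesgue (layer m \<inter> {x - r<..x + r}) \<le> emeasure lebesgue {x - r<..x + r}"
    by (rule emeasure_mono) auto
  also have "\<dots> = ennreal (2 * r)" using assms by simp
  finally show ?thesis using assms by (simp add: measure_def enn2real_leI)
qed

lemma F_increment_le:
  assumes "r > 0"
  shows "F (x + r) - F (x - r) \<le> real N * (real N * (2 * r)) + 2 * (1/2) ^ N"
  unfolding F_increment[OF assms]
proof (rule suminf_le_finite_plus_geometric(2))
  fix m
  show "layer_coef m * measure lebesgue (layer m \<inter> {x - r<..x + r})
      \<le> (if m < N then real N * (2 * r) else 0) + (1/2) ^ N * (1/2) ^ m"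
  proof (cases "m < N")
    case True
    then have "layer_coef m * measure lebesgue (layer m \<inter> {x - r<..x + r}) \<le> real N * (2 * r)"
      using layer_coef_le[of m] layer_coef_nonneg[of m] measure_layer_Int_Ioc_le[of r m x] assms
      by (intro mult_mono) auto
    then show ?thesis using True by (simp add: add_increasing2)
  next
    case False
    then show ?thesis
      using order_trans[OF layer_term_le[of m "{x - r<..x + r}"] quarter_power_le[of N m]] by simp
  qed
qed (use assms in \<open>auto intro: layer_term_nonneg\<close>)

lemma continuous_F: "continuous_on UNIV F"
proof -
  have "isCont F x" for x
    unfolding continuous_at_eps_delta
  proof (intro allI impI)
    fix e :: real
    assume "e > 0"
    obtain N where N: "(1/2::real) ^ N < e / 4"
      using real_arch_pow_inv[of "e / 4" "1/2"] \<open>e > 0\<close> by auto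
    define a where "a = real N * real N + 1"
    define \<delta> where "\<delta> = e / (4 * a)"
    have "a > 0" by (simp add: a_def add_nonneg_pos)
    then have "\<delta> > 0" using \<open>e > 0\<close> by (simp add: \<delta>_def)
    have "real N * (real N * (2 * \<delta>)) \<le> a * (2 * \<delta>)"
      using \<open>\<delta> > 0\<close> by (simp add: a_def algebra_simps)
    also have "\<dots> = e / 2"
      unfolding \<delta>_def using \<open>a > 0\<close> by (simp add: field_simps)
    finally have "F (x + \<delta>) - F (x - \<delta>) < e"
      using F_increment_le[OF \<open>\<delta> > 0\<close>, of x N] N by linarith
    show "\<exists>d>0. \<forall>y. dist y x < d \<longrightarrow> dist (F y) (F x) < e"
    proof (intro exI[of _ \<delta>] conjI allI impI)
      fix y
      assume "dist y x < \<delta>"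
      then have "x - \<delta> \<le> y" "y \<le> x + \<delta>" "x - \<delta> \<le> x" "x \<le> x + \<delta>"
        using \<open>\<delta> > 0\<close> by (auto simp: dist_real_def)
      then have "F (x - \<delta>) \<le> F y" "F y \<le> F (x + \<delta>)" "F (x - \<delta>) \<le> F x" "F x \<le> F (x + \<delta>)"
        by (simp_all add: monoD[OF F_mono])
      with \<open>F (x + \<delta>) - F (x - \<delta>) < e\<close> show "dist (F y) (F x) < e"
        by (simp add: dist_real_def abs_diff_less_iff)
    qed (rule \<open>\<delta> > 0\<close>)
  qed
  then show ?thesis by (simp add: continuous_at_imp_continuous_on)
qed

lemma layer_term_near_compl_le:
  assumes "r > 0" "z \<notin> G m" "dist x z < 5 * r"
  shows "layer_coef (Suc m) * measure lebesgue (layer (Suc m) \<inter> {x - r<..x + r}) \<le> (1/4) ^ Suc m * r"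
proof -
  have "emeasure lebesgue (layer (Suc m) \<inter> {x - r<..x + r}) \<le> emeasure lebesgue (G (Suc m) \<inter> {x - r<..x + r})"
    by (rule emeasure_mono) (auto simp: layer_def G_sets)
  also have "\<dots> \<le> ennreal (layer_eps (Suc m) * r)"
    using sparse_G_Suc[of m] assms unfolding sparse_near_compl_def by blast
  finally have "measure lebesgue (layer (Suc m) \<inter> {x - r<..x + r}) \<le> layer_eps (Suc m) * r"
    using layer_eps_pos assms(1) by (simp add: measure_def enn2real_leI less_imp_le)
  then have "layer_coef (Suc m) * measure lebesgue (layer (Suc m) \<inter> {x - r<..x + r})
      \<le> (layer_coef (Suc m) * layer_eps (Suc m)) * r"
    using layer_coef_nonneg by (simp add: mult_left_mono mult.assoc)
  also have "\<dots> \<le> (1/4) ^ Suc m * r"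
    using assms(1) by (intro mult_right_mono layer_coef_mult_eps_le) auto
  finally show ?thesis .
qed

lemma max_slope_bounded_outside:
  assumes "x \<notin> E"
  obtains K where "\<And>r. r > 0 \<Longrightarrow> max_slope F x r \<le> K"
proof -
  obtain N where "x \<notin> G N" using assms Inter_G_subset by blast
  have "max_slope F x r \<le> real (Suc N) * (real N * 2) + 2" if "r > 0" for r
  proof -
    have "layer_coef m * measure lebesgue (layer m \<inter> {x - r<..x + r})
        \<le> (if m < Suc N then real N * (2 * r) else 0) + r * (1/2) ^ m" for m
    proof (cases "m < Suc N")
      case True
      then have "layer_coef m * measure lebesgue (layer m \<inter> {x - r<..x + r}) \<le> real N * (2 * r)"
        using layer_coef_le[of m] layer_coef_nonneg[of m] measure_layer_Int_Ioc_le[of r m x] \<open>r > 0\<close>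
        by (intro mult_mono) auto
      then show ?thesis using True \<open>r > 0\<close> by (simp add: add_increasing2)
    next
      case False
      then obtain m' where "m = Suc m'" "m' \<ge> N" by (cases m) auto
      then have "x \<notin> G m'" using \<open>x \<notin> G N\<close> G_antimono by blast
      then have "layer_coef m * measure lebesgue (layer m \<inter> {x - r<..x + r}) \<le> (1/4) ^ m * r"
        using layer_term_near_compl_le[of r x m' x] \<open>r > 0\<close> \<open>m = Suc m'\<close> by simp
      also have "\<dots> \<le> r * (1/2) ^ m"
        using \<open>r > 0\<close> by (simp add: mult.commute power_mono)
      finally show ?thesis using False by simp
    qed
    then have "F (x + r) - F (x - r) \<le> real (Suc N) * (real N * (2 * r)) + 2 * r"
      unfolding F_increment[OF \<open>r > 0\<close>]
      by (rule suminf_le_finite_plus_geometric(2)[OF layer_term_nonneg]) (use \<open>r > 0\<close> in auto)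
    then have "(F (x + r) - F (x - r)) / r \<le> real (Suc N) * (real N * 2) + 2"
      using \<open>r > 0\<close> by (simp add: divide_le_eq algebra_simps)
    then show ?thesis
      using max_slope_le_secant[OF F_mono \<open>r > 0\<close>, of x] by linarith
  qed
  then show ?thesis by (rule that)
qed

lemma compl_G_nonempty: "m \<ge> 1 \<Longrightarrow> - G m \<noteq> {}"
proof
  assume "m \<ge> 1" "- G m = {}"
  then have "emeasure lebesgue {0<..layer_eps m + 1} \<le> emeasure lebesgue (G m)"
    by (intro emeasure_mono) (auto simp: G_sets)
  also have "\<dots> \<le> ennreal (layer_eps m)" using emeasure_G_le \<open>m \<ge> 1\<close> by simp
  finally show False using layer_eps_pos[of m] by (simp add: less_imp_le)
qed

lemma infdist_compl_G:
  assumes "x \<in> E" "n \<ge> 1"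
  shows "infdist x (- G n) > 0" "ball x (infdist x (- G n)) \<subseteq> G n"
    "\<exists>z. z \<notin> G n \<and> dist x z = infdist x (- G n)"
proof -
  have "closed (- G n)" using open_G by auto
  moreover have "x \<notin> - G n" using assms E_subset_G by auto
  ultimately show "infdist x (- G n) > 0"
    using compl_G_nonempty[OF assms(2)] by (intro infdist_pos_not_in_closed)
  show "ball x (infdist x (- G n)) \<subseteq> G n"
  proof
    fix y
    assume "y \<in> ball x (infdist x (- G n))"
    moreover have "y \<notin> G n \<Longrightarrow> infdist x (- G n) \<le> dist x y"
      by (intro infdist_le) auto
    ultimately show "y \<in> G n" by force
  qed
  obtain z where "z \<in> - G n" "infdist x (- G n) = dist x z"
    using infdist_attains_inf[OF \<open>closed (- G n)\<close> compl_G_nonempty[OF assms(2)]] by blast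
  then show "\<exists>z. z \<notin> G n \<and> dist x z = infdist x (- G n)" by auto
qed

text \<open>Otherwise a ball around \<open>x\<close> would lie in every \<open>G n\<close>, hence in the null set \<open>E\<close>.\<close>

lemma infdist_compl_G_small:
  assumes "x \<in> E" "\<delta> > 0"
  obtains n0 where "\<And>n. n \<ge> n0 \<Longrightarrow> infdist x (- G n) < \<delta>"
proof (rule ccontr)
  assume "\<not> thesis"
  with that have far: "\<exists>n\<ge>n0. infdist x (- G n) \<ge> \<delta>" for n0
    by (meson not_le)
  have "ball x \<delta> \<subseteq> G m" for m
  proof -
    obtain n where "n \<ge> Suc m" "infdist x (- G n) \<ge> \<delta>" using far by blast
    then have "ball x \<delta> \<subseteq> ball x (infdist x (- G n))" by auto
    also have "\<dots> \<subseteq> G n" using infdist_compl_G(2)[OF assms(1), of n] \<open>n \<ge> Suc m\<close> by simp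
    also have "\<dots> \<subseteq> G m" using G_antimono \<open>n \<ge> Suc m\<close> by simp
    finally show ?thesis .
  qed
  then have "ball x \<delta> \<subseteq> E" using Inter_G_subset by blast
  then have "negligible (ball x \<delta>)"
    using E_null negligible_iff_null_sets negligible_subset by blast
  then show False using open_not_negligible assms(2) by force
qed

lemma max_slope_odd_layer:
  assumes "x \<in> E" "odd n"
  defines "r \<equiv> infdist x (- G n) / 4"
  shows "r > 0" "max_slope F x r \<ge> real n / 2"
proof -
  have "n \<ge> 1" using assms(2) by (cases n) auto
  show "r > 0" unfolding r_def using infdist_compl_G(1)[OF assms(1) \<open>n \<ge> 1\<close>] by simp
  define I where "I = {x - r<..x + r}"
  have "I \<subseteq> ball x (infdist x (- G n))"
    using \<open>r > 0\<close> by (auto simp: I_def r_def dist_real_def)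
  then have "I \<subseteq> G n"
    using infdist_compl_G(2)[OF assms(1) \<open>n \<ge> 1\<close>] by blast
  obtain z where "z \<notin> G n" "dist x z = 4 * r"
    using infdist_compl_G(3)[OF assms(1) \<open>n \<ge> 1\<close>] unfolding r_def by auto
  then have "emeasure lebesgue (G (Suc n) \<inter> I) \<le> ennreal (layer_eps (Suc n) * r)"
    using sparse_G_Suc[of n] \<open>r > 0\<close> unfolding sparse_near_compl_def I_def by auto
  then have "measure lebesgue (G (Suc n) \<inter> I) \<le> layer_eps (Suc n) * r"
    using layer_eps_pos \<open>r > 0\<close> by (simp add: measure_def enn2real_leI less_imp_le)
  also have "\<dots> \<le> r"
    using layer_eps_le_1 \<open>r > 0\<close> by (simp add: mult_left_le_one_le)
  finally have "measure lebesgue (G (Suc n) \<inter> I) \<le> r" .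
  have "layer n \<inter> I = I - (G (Suc n) \<inter> I)" using \<open>I \<subseteq> G n\<close> by (auto simp: layer_def)
  moreover have "measure lebesgue (I - (G (Suc n) \<inter> I)) = 2 * r - measure lebesgue (G (Suc n) \<inter> I)"
    using \<open>r > 0\<close> by (subst measure_Diff) (auto simp: I_def G_sets)
  ultimately have "real n * r \<le> layer_coef n * measure lebesgue (layer n \<inter> I)"
    using assms(2) \<open>measure lebesgue (G (Suc n) \<inter> I) \<le> r\<close> by (simp add: layer_coef_def mult_left_mono)
  also have "\<dots> \<le> F (x + r) - F (x - r)"
    unfolding F_increment[OF \<open>r > 0\<close>] I_def
    by (rule sum_le_suminf[of _ "{n}", simplified]) (auto intro: summable_layer_terms layer_term_nonneg)
  finally have "real n / 2 \<le> (F (x + r) - F (x - r)) / (2 * r)"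
    using \<open>r > 0\<close> by (simp add: field_simps)
  also have "\<dots> \<le> max_slope F x r" by (rule secant_le_max_slope[OF F_mono \<open>r > 0\<close>])
  finally show "max_slope F x r \<ge> real n / 2" .
qed

lemma max_slope_even_layer:
  assumes "x \<in> E" "even n" "n \<ge> 1"
  defines "r \<equiv> infdist x (- G n) / 4"
  shows "r > 0" "max_slope F x r \<le> 2 * (1/2) ^ n"
proof -
  show "r > 0" unfolding r_def using infdist_compl_G(1)[OF assms(1,3)] by simp
  define I where "I = {x - r<..x + r}"
  have "I \<subseteq> ball x (infdist x (- G n))"
    using \<open>r > 0\<close> by (auto simp: I_def r_def dist_real_def)
  then have "I \<subseteq> G n"
    using infdist_compl_G(2)[OF assms(1,3)] by blast
  obtain z where "z \<notin> G n" "dist x z = 4 * r"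
    using infdist_compl_G(3)[OF assms(1,3)] unfolding r_def by auto
  have "layer_coef m * measure lebesgue (layer m \<inter> I) \<le> (if m < 0 then 0 else 0) + (r * (1/2) ^ n) * (1/2) ^ m"
    for m
  proof (cases "m \<le> n")
    case True
    have zero: "layer_coef m * measure lebesgue (layer m \<inter> I) = 0"
    proof (cases "m = n")
      case False
      then have "G n \<subseteq> G (Suc m)" using \<open>m \<le> n\<close> by (intro G_antimono) simp
      then have "layer m \<inter> I = {}" using \<open>I \<subseteq> G n\<close> by (auto simp: layer_def)
      then show ?thesis by simp
    qed (use assms(2) in \<open>simp add: layer_coef_def\<close>)
    show ?thesis unfolding zero using \<open>r > 0\<close> by simp
  next
    case False
    then obtain m' where "m = Suc m'" "m' \<ge> n" by (cases m) auto
    then have "z \<notin> G m'" using \<open>z \<notin> G n\<close> G_antimono by blast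
    then have "layer_coef m * measure lebesgue (layer m \<inter> I) \<le> (1/4) ^ m * r"
      using layer_term_near_compl_le[of r z m' x] \<open>r > 0\<close> \<open>dist x z = 4 * r\<close> \<open>m = Suc m'\<close>
      by (simp add: I_def)
    also have "\<dots> \<le> (1/2) ^ n * (1/2) ^ m * r"
      using quarter_power_le[of n m] \<open>m' \<ge> n\<close> \<open>m = Suc m'\<close> \<open>r > 0\<close> by (intro mult_right_mono) auto
    finally show ?thesis by (simp add: mult_ac)
  qed
  then have "F (x + r) - F (x - r) \<le> real 0 * 0 + 2 * (r * (1/2) ^ n)"
    unfolding F_increment[OF \<open>r > 0\<close>]
    by (intro suminf_le_finite_plus_geometric(2)) (use \<open>r > 0\<close> in \<open>auto simp: I_def intro: layer_term_nonneg\<close>)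
  then have "(F (x + r) - F (x - r)) / r \<le> 2 * (1/2) ^ n"
    using \<open>r > 0\<close> by (simp add: divide_le_eq algebra_simps)
  then show "max_slope F x r \<le> 2 * (1/2) ^ n"
    using max_slope_le_secant[OF F_mono \<open>r > 0\<close>, of x] by linarith
qed

lemma Lip_upper_F_in_E:
  assumes "x \<in> E"
  shows "Lip_upper F x = \<infinity>"
  unfolding Lip_upper_mono_eq[OF F_mono] Limsup_at_right_eq_PInf_iff
proof (intro allI impI)
  fix K \<delta> :: real
  assume "\<delta> > 0"
  obtain n0 where n0: "\<And>n. n \<ge> n0 \<Longrightarrow> infdist x (- G n) < \<delta>"
    using infdist_compl_G_small[OF assms \<open>\<delta> > 0\<close>] by blast
  obtain k :: nat where "K < k" using reals_Archimedean2 by blast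
  define n where "n = 2 * (n0 + k) + 1"
  have "odd n" "n \<ge> n0" "K < real n / 2" using \<open>K < k\<close> by (auto simp: n_def)
  with max_slope_odd_layer[OF assms \<open>odd n\<close>] n0 show "\<exists>r. 0 < r \<and> r < \<delta> \<and> K < max_slope F x r"
    by (intro exI[of _ "infdist x (- G n) / 4"]) force
qed

lemma lip_lower_F_in_E:
  assumes "x \<in> E"
  shows "lip_lower F x = 0"
  unfolding lip_lower_mono_eq[OF F_mono]
proof (rule Liminf_at_right_eq_0)
  show "0 \<le> max_slope F x r" if "r > 0" for r
    using max_slope_nonneg[OF F_mono that] .
  fix c \<delta> :: real
  assume "c > 0" "\<delta> > 0"
  obtain n0 where n0: "\<And>n. n \<ge> n0 \<Longrightarrow> infdist x (- G n) < \<delta>"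
    using infdist_compl_G_small[OF assms \<open>\<delta> > 0\<close>] by blast
  obtain N where N: "(1/2::real) ^ N < c / 2"
    using real_arch_pow_inv[of "c / 2" "1/2"] \<open>c > 0\<close> by auto
  define n where "n = 2 * (n0 + N + 1)"
  have "even n" "n \<ge> 1" "n \<ge> n0" by (auto simp: n_def)
  have "(1/2::real) ^ n \<le> (1/2) ^ N" by (intro power_decreasing) (auto simp: n_def)
  then have "max_slope F x (infdist x (- G n) / 4) < c"
    using max_slope_even_layer(2)[OF assms \<open>even n\<close> \<open>n \<ge> 1\<close>] N by linarith
  with max_slope_even_layer(1)[OF assms \<open>even n\<close> \<open>n \<ge> 1\<close>] n0[OF \<open>n \<ge> n0\<close>]
  show "\<exists>r. 0 < r \<and> r < \<delta> \<and> max_slope F x r < c"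
    by (intro exI[of _ "infdist x (- G n) / 4"]) auto
qed

lemma Lip_upper_F_not_in_E:
  assumes "x \<notin> E"
  shows "Lip_upper F x \<noteq> \<infinity>"
proof -
  obtain K where "\<And>r. r > 0 \<Longrightarrow> max_slope F x r \<le> K"
    using max_slope_bounded_outside[OF assms] by blast
  then have "Lip_upper F x \<le> ereal K"
    unfolding Lip_upper_mono_eq[OF F_mono]
    by (intro Limsup_bounded) (auto simp: eventually_at_right_field intro!: exI[of _ 1])
  then show ?thesis by auto
qed

lemma L_inf_F: "L_inf F = E"
  using Lip_upper_F_in_E Lip_upper_F_not_in_E by (auto simp: L_inf_def)

lemma l_inf_F: "l_inf F = {}"
proof -
  have "lip_lower F x \<noteq> \<infinity>" for x
  proof (cases "x \<in> E")
    case False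
    have "lip_lower F x \<le> Lip_upper F x"
      unfolding lip_lower_def Lip_upper_def by (rule Liminf_le_Limsup) simp
    then show ?thesis using Lip_upper_F_not_in_E[OF False] by auto
  qed (simp add: lip_lower_F_in_E)
  then show ?thesis by (auto simp: l_inf_def)
qed

end

lemma layered_null_set_exists:
  assumes "gdelta E" "E \<in> null_sets lebesgue"
  obtains G where "layered_null_set E G"
proof -
  obtain U :: "nat \<Rightarrow> real set" where U: "\<And>n. open (U n)" and E_eq: "E = (\<Inter>n. U n)"
    using assms(1) by (cases rule: gdelta.cases) auto
  have "\<exists>V. open V \<and> E \<subseteq> V \<and> V \<subseteq> U \<and> emeasure lebesgue V \<le> ennreal \<epsilon> \<and> sparse_near_compl U \<epsilon> V"
    if "open U \<and> E \<subseteq> U \<and> \<epsilon> > 0" for U \<epsilon>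
    using that sparse_open_cover[OF _ _ assms(2)] by metis
  then obtain shrink where shrink: "\<And>U \<epsilon>. open U \<and> E \<subseteq> U \<and> \<epsilon> > 0 \<Longrightarrow>
      open (shrink U \<epsilon>) \<and> E \<subseteq> shrink U \<epsilon> \<and> shrink U \<epsilon> \<subseteq> U
      \<and> emeasure lebesgue (shrink U \<epsilon>) \<le> ennreal \<epsilon> \<and> sparse_near_compl U \<epsilon> (shrink U \<epsilon>)"
    by metis
  define G where "G = rec_nat UNIV (\<lambda>m Gm. shrink (Gm \<inter> U m) (layer_eps (Suc m)))"
  have G_Suc: "G (Suc m) = shrink (G m \<inter> U m) (layer_eps (Suc m))" for m
    by (simp add: G_def)
  have "open (G m) \<and> E \<subseteq> G m" for m
  proof (induction m)
    case 0
    then show ?case by (simp add: G_def)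
  next
    case (Suc m)
    then show ?case
      using shrink[of "G m \<inter> U m" "layer_eps (Suc m)"] U E_eq layer_eps_pos by (auto simp: G_Suc)
  qed
  then have step: "open (G (Suc m)) \<and> E \<subseteq> G (Suc m) \<and> G (Suc m) \<subseteq> G m \<inter> U m
      \<and> emeasure lebesgue (G (Suc m)) \<le> ennreal (layer_eps (Suc m))
      \<and> sparse_near_compl (G m \<inter> U m) (layer_eps (Suc m)) (G (Suc m))" for m
    unfolding G_Suc using U E_eq layer_eps_pos by (intro shrink) auto
  show ?thesis
  proof (rule that, unfold_locales)
    show "open (G m)" "E \<subseteq> G m" for m
      using \<open>\<And>m. open (G m) \<and> E \<subseteq> G m\<close> by auto
    show "G (Suc m) \<subseteq> G m" "emeasure lebesgue (G (Suc m)) \<le> ennreal (layer_eps (Suc m))" for m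
      using step[of m] by auto
    show "sparse_near_compl (G m) (layer_eps (Suc m)) (G (Suc m))" for m
      using step[of m] sparse_near_compl_mono by blast
    show "(\<Inter>m. G m) \<subseteq> E"
      using step E_eq by blast
  qed (rule assms(2))
qed

lemma gdelta_null_L_inf:
  assumes "continuous_on UNIV f" "mono f \<or> antimono f"
  shows "gdelta (L_inf f) \<and> L_inf f \<in> null_sets lebesgue"
proof -
  obtain g where "mono g" "continuous_on UNIV g" "L_inf g = L_inf f"
  proof (cases "mono f")
    case False
    with assms(2) have "antimono f" by blast
    then have "mono (\<lambda>x. - f x)" by (simp add: mono_def antimono_def)
    with assms(1) show ?thesis
      by (intro that[of "\<lambda>x. - f x"]) (auto intro: continuous_intros simp: L_inf_uminus)
  qed (use assms(1) that in blast)
  then show ?thesis using gdelta_L_inf_mono null_sets_L_inf_mono by metis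
qed

theorem theorem2:
  shows "(\<forall>f :: real \<Rightarrow> real. continuous_on UNIV f \<and> (mono f \<or> antimono f) \<longrightarrow>
            gdelta (L_inf f) \<and> L_inf f \<in> null_sets lebesgue)
       \<and> (\<forall>E :: real set. gdelta E \<and> E \<in> null_sets lebesgue \<longrightarrow>
            (\<exists>f :: real \<Rightarrow> real. continuous_on UNIV f \<and> (mono f \<or> antimono f) \<and>
               L_inf f = E \<and> l_inf f = {} \<and> (\<forall>x\<in>E. lip_lower f x = 0)))"
proof (rule conjI; intro allI impI)
  fix f :: "real \<Rightarrow> real"
  assume "continuous_on UNIV f \<and> (mono f \<or> antimono f)"
  then show "gdelta (L_inf f) \<and> L_inf f \<in> null_sets lebesgue"
    using gdelta_null_L_inf by blast
next
  fix E :: "real set"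
  assume "gdelta E \<and> E \<in> null_sets lebesgue"
  then obtain G where "layered_null_set E G"
    using layered_null_set_exists by blast
  then interpret layered_null_set E G .
  show "\<exists>f. continuous_on UNIV f \<and> (mono f \<or> antimono f) \<and>
      L_inf f = E \<and> l_inf f = {} \<and> (\<forall>x\<in>E. lip_lower f x = 0)"
    using continuous_F F_mono L_inf_F l_inf_F lip_lower_F_in_E by blast
qed

end
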